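(* Let $c(t)$ be a solution of Hamilton's equations for the Kepler–Heisenberg Hamiltonian defined on an open interval $I$, and suppose $z(t) = 0$ for all $t\in I$. Then the projected curve $t\mapsto (x(t),y(t))$ is contained in a straight line through the origin of the $xy$-plane.
   Context: Phase space is $T^*\mathbb R^3$ with coordinates $(x,y,z,p_x,p_y,p_z)$. Set $P_X = p_x - \tfrac12 y p_z$, $P_Y = p_y + \tfrac12 x p_z$. The Kepler–Heisenberg Hamiltonian is $H = \tfrac12(P_X^2 + P_Y^2) - \frac{1}{8\pi\sqrt{(x^2+y^2)^2+16z^2}}$, defined away from $x=y=z=0$. *)

theory Defs
  imports "HOL-Analysis.Analysis"
begin

definition KH_PX :: "real \<Rightarrow> real \<Rightarrow> real \<Rightarrow> real \<Rightarrow> real \<Rightarrow> real \<Rightarrow> real" where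
  "KH_PX x y z px py pz = px - 1/2 * y * pz"

definition KH_PY :: "real \<Rightarrow> real \<Rightarrow> real \<Rightarrow> real \<Rightarrow> real \<Rightarrow> real \<Rightarrow> real" where
  "KH_PY x y z px py pz = py + 1/2 * x * pz"

definition KH_H :: "real \<Rightarrow> real \<Rightarrow> real \<Rightarrow> real \<Rightarrow> real \<Rightarrow> real \<Rightarrow> real" where
  "KH_H x y z px py pz =
     1/2 * ((KH_PX x y z px py pz)\<^sup>2 + (KH_PY x y z px py pz)\<^sup>2)
     - 1 / (8 * pi * sqrt ((x\<^sup>2 + y\<^sup>2)\<^sup>2 + 16 * z\<^sup>2))"

text \<open>A curve c(t) = (x,y,z,px,py,pz)(t) on I solves Hamilton's equations for KH_H:
  it stays in the domain (away from x=y=z=0), each coordinate is differentiable, and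
  q_i' = dH/dp_i, p_i' = - dH/dq_i (partial derivatives along the curve).\<close>

definition KH_hamilton_solution ::
  "real set \<Rightarrow> (real \<Rightarrow> real) \<Rightarrow> (real \<Rightarrow> real) \<Rightarrow> (real \<Rightarrow> real) \<Rightarrow>
   (real \<Rightarrow> real) \<Rightarrow> (real \<Rightarrow> real) \<Rightarrow> (real \<Rightarrow> real) \<Rightarrow> bool" where
  "KH_hamilton_solution I x y z px py pz \<longleftrightarrow>
    (\<forall>t\<in>I.
      \<not> (x t = 0 \<and> y t = 0 \<and> z t = 0) \<and>
      (\<exists>d. (x has_real_derivative d) (at t) \<and>
           ((\<lambda>s. KH_H (x t) (y t) (z t) s (py t) (pz t)) has_real_derivative d) (at (px t))) \<and>
      (\<exists>d. (y has_real_derivative d) (at t) \<and>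
           ((\<lambda>s. KH_H (x t) (y t) (z t) (px t) s (pz t)) has_real_derivative d) (at (py t))) \<and>
      (\<exists>d. (z has_real_derivative d) (at t) \<and>
           ((\<lambda>s. KH_H (x t) (y t) (z t) (px t) (py t) s) has_real_derivative d) (at (pz t))) \<and>
      (\<exists>d. (px has_real_derivative d) (at t) \<and>
           ((\<lambda>s. KH_H s (y t) (z t) (px t) (py t) (pz t)) has_real_derivative (- d)) (at (x t))) \<and>
      (\<exists>d. (py has_real_derivative d) (at t) \<and>
           ((\<lambda>s. KH_H (x t) s (z t) (px t) (py t) (pz t)) has_real_derivative (- d)) (at (y t))) \<and>
      (\<exists>d. (pz has_real_derivative d) (at t) \<and>
           ((\<lambda>s. KH_H (x t) (y t) s (px t) (py t) (pz t)) has_real_derivative (- d)) (at (z t))))"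

end

theory Submission
  imports Defs
begin

text \<open>Along a solution the momenta P_X, P_Y are the planar velocities, and the vertical
  velocity is half the planar angular momentum. If z vanishes identically, the angular
  momentum x y' - y x' vanishes; since the planar curve then avoids the origin, the quantity
  (x y0 - y x0)^2 / (x^2 + y^2) has derivative zero, so it stays equal to its initial
  value 0 and the curve stays on the line through (x0, y0).\<close>

lemma KH_H_has_derivative_px:
  "((\<lambda>s. KH_H a b c s e f) has_real_derivative KH_PX a b c p e f) (at p)"
  unfolding KH_H_def KH_PX_def KH_PY_def
  by (rule derivative_eq_intros refl)+ simp

lemma KH_H_has_derivative_py:
  "((\<lambda>s. KH_H a b c d s f) has_real_derivative KH_PY a b c d p f) (at p)"
  unfolding KH_H_def KH_PX_def KH_PY_def
  by (rule derivative_eq_intros refl)+ simp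

lemma KH_H_has_derivative_pz:
  "((\<lambda>s. KH_H a b c d e s) has_real_derivative
     (a * KH_PY a b c d e p - b * KH_PX a b c d e p) / 2) (at p)"
  unfolding KH_H_def KH_PX_def KH_PY_def
  by (rule derivative_eq_intros refl)+ (simp add: algebra_simps)

lemma KH_hamilton_solution_vertical_velocity:
  assumes "KH_hamilton_solution I x y z px py pz" and "t \<in> I"
  shows "(x has_real_derivative deriv x t) (at t)"
    and "(y has_real_derivative deriv y t) (at t)"
    and "(z has_real_derivative (x t * deriv y t - y t * deriv x t) / 2) (at t)"
proof -
  obtain X where X: "(x has_real_derivative X) (at t)"
    "((\<lambda>s. KH_H (x t) (y t) (z t) s (py t) (pz t)) has_real_derivative X) (at (px t))"
    using assms unfolding KH_hamilton_solution_def by blast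
  obtain Y where Y: "(y has_real_derivative Y) (at t)"
    "((\<lambda>s. KH_H (x t) (y t) (z t) (px t) s (pz t)) has_real_derivative Y) (at (py t))"
    using assms unfolding KH_hamilton_solution_def by blast
  obtain Z where Z: "(z has_real_derivative Z) (at t)"
    "((\<lambda>s. KH_H (x t) (y t) (z t) (px t) (py t) s) has_real_derivative Z) (at (pz t))"
    using assms unfolding KH_hamilton_solution_def by blast
  have X_eq: "X = deriv x t" and Y_eq: "Y = deriv y t"
    using X(1) Y(1) by (simp_all add: DERIV_imp_deriv)
  have "X = KH_PX (x t) (y t) (z t) (px t) (py t) (pz t)"
    using X(2) KH_H_has_derivative_px by (rule DERIV_unique)
  moreover have "Y = KH_PY (x t) (y t) (z t) (px t) (py t) (pz t)"
    using Y(2) KH_H_has_derivative_py by (rule DERIV_unique)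
  ultimately have "Z = (x t * Y - y t * X) / 2"
    using DERIV_unique[OF Z(2) KH_H_has_derivative_pz] by simp
  with X(1) Y(1) Z(1) show "(x has_real_derivative deriv x t) (at t)"
    "(y has_real_derivative deriv y t) (at t)"
    "(z has_real_derivative (x t * deriv y t - y t * deriv x t) / 2) (at t)"
    by (simp_all add: X_eq Y_eq)
qed

lemma angular_momentum_zero_imp_on_line:
  fixes x y x' y' :: "real \<Rightarrow> real"
  assumes "is_interval I"
    and x': "\<And>t. t \<in> I \<Longrightarrow> (x has_real_derivative x' t) (at t within I)"
    and y': "\<And>t. t \<in> I \<Longrightarrow> (y has_real_derivative y' t) (at t within I)"
    and nonzero: "\<And>t. t \<in> I \<Longrightarrow> (x t, y t) \<noteq> (0, 0)"
    and momentum: "\<And>t. t \<in> I \<Longrightarrow> x t * y' t - y t * x' t = 0"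
  shows "\<exists>a b. (a, b) \<noteq> (0, 0) \<and> (\<forall>t\<in>I. a * x t + b * y t = 0)"
proof (cases "I = {}")
  case True
  then show ?thesis by (intro exI[of _ 1] exI[of _ 0]) simp
next
  case False
  then obtain t0 where t0: "t0 \<in> I" by blast
  define g where "g t = (x t * y t0 - y t * x t0)\<^sup>2 / ((x t)\<^sup>2 + (y t)\<^sup>2)" for t
  have norm_nonzero: "(x t)\<^sup>2 + (y t)\<^sup>2 \<noteq> 0" if "t \<in> I" for t
    using nonzero[OF that] by (simp add: sum_power2_eq_zero_iff)
  have "(g has_real_derivative 0) (at t within I)" if t: "t \<in> I" for t
  proof -
    have "(g has_real_derivative
        2 * (x t * y t0 - y t * x t0) * (y t * x' t - x t * y' t) * (x t * x t0 + y t * y t0)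
          / ((x t)\<^sup>2 + (y t)\<^sup>2)\<^sup>2) (at t within I)"
      unfolding g_def
      by (rule derivative_eq_intros x'[OF t] y'[OF t] refl)+
        (use norm_nonzero[OF t] in \<open>simp_all add: power2_eq_square field_simps\<close>)
    then show ?thesis using momentum[OF t] by simp
  qed
  then obtain c where "\<forall>t\<in>I. g t = c"
    using has_field_derivative_zero_constant[OF is_interval_convex[OF assms(1)]] by blast
  moreover have "g t0 = 0" unfolding g_def by simp
  ultimately have "g t = 0" if "t \<in> I" for t
    using t0 that by metis
  then have "\<forall>t\<in>I. y t0 * x t + (- x t0) * y t = 0"
    using norm_nonzero by (force simp: g_def mult.commute)
  moreover have "(y t0, - x t0) \<noteq> (0, 0)" using nonzero[OF t0] by auto
  ultimately show ?thesis by blast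
qed

theorem mainTheorem4:
  fixes I :: "real set" and x y z px py pz :: "real \<Rightarrow> real"
  assumes "open I" and "is_interval I"
    and "KH_hamilton_solution I x y z px py pz"
    and "\<forall>t\<in>I. z t = 0"
  shows "\<exists>a b. (a, b) \<noteq> (0::real, 0::real) \<and> (\<forall>t\<in>I. a * x t + b * y t = 0)"
proof (rule angular_momentum_zero_imp_on_line[OF \<open>is_interval I\<close>])
  fix t assume t: "t \<in> I"
  note velocity = KH_hamilton_solution_vertical_velocity[OF assms(3) t]
  show "(x has_real_derivative deriv x t) (at t within I)"
    "(y has_real_derivative deriv y t) (at t within I)"
    using velocity(1,2) by (simp_all add: has_field_derivative_at_within)
  show "(x t, y t) \<noteq> (0, 0)"
    using assms(3,4) t unfolding KH_hamilton_solution_def by auto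
  have "eventually (\<lambda>s. z s = 0) (nhds t)"
    using assms(1,4) t eventually_nhds by blast
  then have "(z has_real_derivative 0) (at t)"
    by (rule DERIV_cong_ev[OF refl _ refl, THEN iffD2]) simp
  then show "x t * deriv y t - y t * deriv x t = 0"
    using DERIV_unique[OF velocity(3)] by simp
qed

end
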